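(* Let $n=1$, so $\mathfrak h_1$ is the upper half-plane with the action of $SL_2(\mathbb R)$ by fractional linear transformations, and let $X=\Gamma(2)\backslash\mathfrak h_1$ with the anti-holomorphic involution induced by $\tau(z)=-\overline z$. Let $S'=\{\pm I,\pm v\}$ with $v=\begin{pmatrix}0&-1\\1&0\end{pmatrix}$. Then the set $X_{\mathbb R}$ of $\tau$-real points of $X$ is the union of three copies of the half-line $C_1\cong\mathbb R_{>0}$: $$X_{\mathbb R}=\bigcup_{\beta\in\Gamma(2)\backslash SL_2(\mathbb Z)/S'}\ \beta\cdot iC_1$$ (images in $X$), where $iC_1=\{iy:y>0\}$.
   Context: $\Gamma(2)=\{\gamma\in SL_2(\mathbb Z):\gamma\equiv I\bmod 2\}$. A point of $X$ is $\tau$-real if it is fixed by the involution induced by $z\mapsto-\overline z$. *)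

theory Defs
  imports Complex_Main
begin

text \<open>2x2 integer matrices (a b; c d) represented as tuples (a, b, c, d).\<close>
type_synonym mat2 = "int \<times> int \<times> int \<times> int"

fun mmult :: "mat2 \<Rightarrow> mat2 \<Rightarrow> mat2" where
  "mmult (a, b, c, d) (a', b', c', d') =
     (a*a' + b*c', a*b' + b*d', c*a' + d*c', c*b' + d*d')"

definition SL2Z :: "mat2 set" where
  "SL2Z = {(a, b, c, d). a*d - b*c = 1}"

definition Gamma2 :: "mat2 set" where
  "Gamma2 = {(a, b, c, d). (a, b, c, d) \<in> SL2Z \<and> odd a \<and> even b \<and> even c \<and> odd d}"

fun mact :: "mat2 \<Rightarrow> complex \<Rightarrow> complex" where
  "mact (a, b, c, d) z = (of_int a * z + of_int b) / (of_int c * z + of_int d)"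

definition upper_half_plane :: "complex set" where
  "upper_half_plane = {z. Im z > 0}"

text \<open>Gamma(2)-orbit of a point: a point of X = Gamma(2)\textbackslash h.\<close>
definition orbit2 :: "complex \<Rightarrow> complex set" where
  "orbit2 z = {mact g z | g. g \<in> Gamma2}"

definition Xquot :: "complex set set" where
  "Xquot = orbit2 ` upper_half_plane"

definition tau :: "complex \<Rightarrow> complex" where
  "tau z = - cnj z"

definition tauX :: "complex set \<Rightarrow> complex set" where
  "tauX p = tau ` p"

definition X_real :: "complex set set" where
  "X_real = {p \<in> Xquot. tauX p = p}"

definition vmat :: mat2 where "vmat = (0, -1, 1, 0)"

definition S' :: "mat2 set" where
  "S' = {(1, 0, 0, 1), (-1, 0, 0, -1), vmat, (0, 1, -1, 0)}"

definition double_coset :: "mat2 \<Rightarrow> mat2 set" where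
  "double_coset \<beta> = {mmult (mmult g \<beta>) s | g s. g \<in> Gamma2 \<and> s \<in> S'}"

definition double_cosets :: "mat2 set set" where
  "double_cosets = double_coset ` SL2Z"

definition iC1 :: "complex set" where
  "iC1 = {\<i> * of_real y | y. y > 0}"

end

(*
  Reduction mod 2 identifies Gamma(2)\SL2(Z) with SL2(Z/2Z), a group of order 6; modulo 2
  the set S' is {I, v}, and right multiplication by v swaps the columns, so the six parity
  patterns fall into three double cosets.

  A point Gamma(2) z is tau-real iff -cnj z = g z for some g in Gamma(2).  Comparing imaginary
  parts forces g = (a, b, c, a), and then z lies on the geodesic c |z|^2 + 2 a Re z + b = 0 with
  a^2 - b c = 1 and b, c even.  Translating z by an integer makes |2a| <= c, and then z -> -1/z
  yields a geodesic of the same kind with c replaced by some 0 <= b < c (here a odd is used);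
  by descent z lies in SL2(Z) i R_{>0}.  Conversely, for z = beta (i t) one has
  tau z = (tau beta) beta^-1 z, and tau beta = beta mod 2.  Finally the Gamma(2)-orbits of
  beta i C1 only depend on the double coset of beta, since S' maps i C1 onto itself.
*)

theory Submission
  imports Defs
begin

section \<open>Integer matrices modulo 2\<close>

definition I2 :: mat2 where "I2 = (1, 0, 0, 1)"

definition adj2 :: "mat2 \<Rightarrow> mat2" where "adj2 = (\<lambda>(a, b, c, d). (d, -b, -c, a))"

lemma SL2Z_iff: "(a, b, c, d) \<in> SL2Z \<longleftrightarrow> a*d - b*c = 1"
  by (simp add: SL2Z_def)

lemma Gamma2_iff:
  "(a, b, c, d) \<in> Gamma2 \<longleftrightarrow> a*d - b*c = 1 \<and> odd a \<and> even b \<and> even c \<and> odd d"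
  by (simp add: Gamma2_def SL2Z_def)

lemma Gamma2_subset_SL2Z: "Gamma2 \<subseteq> SL2Z"
  by (auto simp: Gamma2_def)

lemma mmult_assoc: "mmult (mmult A B) C = mmult A (mmult B C)"
  by (cases A; cases B; cases C) (simp add: algebra_simps)

lemma mmult_I2 [simp]: "mmult I2 A = A" "mmult A I2 = A"
  by (cases A; simp add: I2_def)+

lemma SL2Z_mmult:
  assumes "A \<in> SL2Z" "B \<in> SL2Z"
  shows "mmult A B \<in> SL2Z"
proof -
  obtain a b c d a' b' c' d' where A: "A = (a, b, c, d)" "B = (a', b', c', d')"
    by (metis prod_cases4)
  have "(a*a' + b*c') * (c*b' + d*d') - (a*b' + b*d') * (c*a' + d*c')
      = (a*d - b*c) * (a'*d' - b'*c')"
    by algebra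
  then show ?thesis
    using assms by (simp add: A SL2Z_iff)
qed

lemma SL2Z_adj2:
  assumes "A \<in> SL2Z"
  shows "adj2 A \<in> SL2Z" "mmult (adj2 A) A = I2" "mmult A (adj2 A) = I2"
  using assms by (cases A; auto simp: adj2_def I2_def SL2Z_iff algebra_simps)+

lemma Gamma2_mmult: "A \<in> Gamma2 \<Longrightarrow> B \<in> Gamma2 \<Longrightarrow> mmult A B \<in> Gamma2"
  using SL2Z_mmult Gamma2_subset_SL2Z by (cases A; cases B) (auto simp: Gamma2_def)

lemma Gamma2_adj2: "A \<in> Gamma2 \<Longrightarrow> adj2 A \<in> Gamma2"
  by (cases A) (auto simp: adj2_def Gamma2_iff algebra_simps)

lemma I2_Gamma2: "I2 \<in> Gamma2"
  by (simp add: I2_def Gamma2_iff)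

definition parity :: "mat2 \<Rightarrow> bool \<times> bool \<times> bool \<times> bool" where
  "parity = (\<lambda>(a, b, c, d). (even a, even b, even c, even d))"

lemma parity_mmult_Gamma2: "h \<in> Gamma2 \<Longrightarrow> parity (mmult h m) = parity m"
  by (cases h; cases m) (simp add: parity_def Gamma2_iff)

lemma mmult_adj2_Gamma2_if_parity_eq:
  assumes "g \<in> SL2Z" "m \<in> SL2Z" "parity g = parity m"
  shows "mmult g (adj2 m) \<in> Gamma2"
proof -
  obtain a b c d a' b' c' d' where A: "g = (a, b, c, d)" "m = (a', b', c', d')"
    by (metis prod_cases4)
  have "odd (a*d - b*c)" "odd (a'*d' - b'*c')"
    using assms(1,2) by (simp_all add: A SL2Z_iff)
  moreover have "mmult g (adj2 m) \<in> SL2Z"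
    using assms SL2Z_mmult SL2Z_adj2 by blast
  ultimately show ?thesis
    using assms(3) by (simp add: A adj2_def parity_def Gamma2_def) blast
qed

section \<open>The action on the upper half-plane\<close>

lemma mact_denom_nonzero:
  assumes "(a, b, c, d) \<in> SL2Z" "Im z \<noteq> 0"
  shows "of_int c * z + of_int d \<noteq> 0"
proof
  assume denom: "of_int c * z + of_int d = 0"
  then have "Im (of_int c * z + of_int d) = 0"
    by simp
  then have "c = 0"
    using assms(2) by simp
  with denom assms(1) show False
    by (simp add: SL2Z_iff)
qed

lemma Im_mact:
  assumes "(a, b, c, d) \<in> SL2Z"
  shows "Im (mact (a, b, c, d) z) = Im z / (cmod (of_int c * z + of_int d))\<^sup>2"
proof -
  have "Im (of_int a * z + of_int b) * Re (of_int c * z + of_int d)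
      - Re (of_int a * z + of_int b) * Im (of_int c * z + of_int d) = of_int (a*d - b*c) * Im z"
    by (simp add: algebra_simps)
  moreover have "a*d - b*c = 1"
    using assms by (simp add: SL2Z_iff)
  ultimately show ?thesis
    by (simp add: Im_divide')
qed

lemma Im_mact_pos: "g \<in> SL2Z \<Longrightarrow> Im z > 0 \<Longrightarrow> Im (mact g z) > 0"
  by (cases g) (simp add: Im_mact mact_denom_nonzero del: mact.simps)

lemma mact_mmult:
  assumes "B \<in> SL2Z" "Im z \<noteq> 0"
  shows "mact (mmult A B) z = mact A (mact B z)"
proof -
  obtain a b c d p q r s where AB: "A = (a, b, c, d)" "B = (p, q, r, s)"
    by (metis prod_cases4)
  define P Q where "P = of_int p * z + of_int q" and "Q = of_int r * z + of_int s"
  have "Q \<noteq> 0"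
    using mact_denom_nonzero assms AB unfolding Q_def by blast
  then have "mact A (mact B z) = (of_int a * P + of_int b * Q) / (of_int c * P + of_int d * Q)"
    by (simp add: AB P_def Q_def add_frac_num)
  also have "\<dots> = mact (mmult A B) z"
    by (simp add: AB P_def Q_def algebra_simps)
  finally show ?thesis ..
qed

lemma mact_I2 [simp]: "mact I2 z = z"
  by (simp add: I2_def)

lemma Gamma2_mmult_right_image: "h \<in> Gamma2 \<Longrightarrow> (\<lambda>g. mmult g h) ` Gamma2 = Gamma2"
proof (intro equalityI subsetI)
  fix g assume h: "h \<in> Gamma2" and g: "g \<in> Gamma2"
  then have "h \<in> SL2Z"
    using Gamma2_subset_SL2Z by blast
  then have "g = mmult (mmult g (adj2 h)) h"
    by (simp add: mmult_assoc SL2Z_adj2(2))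
  moreover have "mmult g (adj2 h) \<in> Gamma2"
    using g h Gamma2_mmult Gamma2_adj2 by blast
  ultimately show "g \<in> (\<lambda>g. mmult g h) ` Gamma2"
    by blast
qed (use Gamma2_mmult in blast)

lemma orbit2_eq_image: "orbit2 z = (\<lambda>g. mact g z) ` Gamma2"
  unfolding orbit2_def by blast

lemma orbit2_mact:
  assumes "h \<in> Gamma2" "Im z \<noteq> 0"
  shows "orbit2 (mact h z) = orbit2 z"
proof -
  have "h \<in> SL2Z"
    using assms(1) Gamma2_subset_SL2Z by blast
  then have "mact g (mact h z) = mact (mmult g h) z" for g
    by (rule mact_mmult[symmetric, OF _ assms(2)])
  then have "orbit2 (mact h z) = (\<lambda>g. mact g z) ` (\<lambda>g. mmult g h) ` Gamma2"
    by (simp add: orbit2_eq_image image_image)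
  then show ?thesis
    by (simp add: Gamma2_mmult_right_image assms(1) orbit2_eq_image)
qed

lemma mem_orbit2_self: "z \<in> orbit2 z"
  unfolding orbit2_eq_image using I2_Gamma2 by (metis image_eqI mact_I2)

lemma orbit2_eq_iff:
  assumes "Im z \<noteq> 0"
  shows "orbit2 w = orbit2 z \<longleftrightarrow> w \<in> orbit2 z"
proof
  assume "w \<in> orbit2 z"
  then obtain g where "g \<in> Gamma2" "w = mact g z"
    by (auto simp: orbit2_eq_image)
  then show "orbit2 w = orbit2 z"
    using orbit2_mact assms by blast
qed (use mem_orbit2_self in blast)

definition tau_mat :: "mat2 \<Rightarrow> mat2" where
  "tau_mat = (\<lambda>(a, b, c, d). (a, -b, -c, d))"

lemma tau_mact: "tau (mact g z) = mact (tau_mat g) (tau z)"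
  by (cases g) (simp add: tau_mat_def tau_def minus_divide_left)

lemma tau_mat_Gamma2: "tau_mat ` Gamma2 = Gamma2"
proof -
  have into: "tau_mat ` Gamma2 \<subseteq> Gamma2"
    by (auto simp: tau_mat_def Gamma2_iff)
  have "tau_mat (tau_mat g) = g" for g
    by (cases g) (simp add: tau_mat_def)
  then have "Gamma2 \<subseteq> tau_mat ` Gamma2"
    using into by (metis image_eqI image_subset_iff subsetI)
  with into show ?thesis ..
qed

lemma tauX_orbit2: "tauX (orbit2 z) = orbit2 (tau z)"
proof -
  have "tauX (orbit2 z) = (\<lambda>g. mact g (tau z)) ` tau_mat ` Gamma2"
    unfolding tauX_def orbit2_eq_image image_image tau_mact ..
  then show ?thesis
    by (simp add: tau_mat_Gamma2 orbit2_eq_image)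
qed

section \<open>Double cosets\<close>

lemma I2_S': "I2 \<in> S'" and vmat_S': "vmat \<in> S'"
  by (simp_all add: S'_def I2_def)

lemma S'_subset_SL2Z: "S' \<subseteq> SL2Z"
  by (auto simp: S'_def vmat_def SL2Z_iff)

lemma mem_double_coset_self: "\<beta> \<in> double_coset \<beta>"
proof -
  have "\<beta> = mmult (mmult I2 \<beta>) I2"
    by simp
  then show ?thesis
    unfolding double_coset_def using I2_Gamma2 I2_S' by blast
qed

text \<open>Modulo 2 the set \<open>S'\<close> reduces to \<open>{I2, vmat}\<close>, so this is the reduction of the coset
  \<open>m S'\<close>.\<close>
definition parity_class :: "mat2 \<Rightarrow> (bool \<times> bool \<times> bool \<times> bool) set" where
  "parity_class m = {parity m, parity (mmult m vmat)}"

lemma parity_class_mmult_Gamma2: "h \<in> Gamma2 \<Longrightarrow> parity_class (mmult h m) = parity_class m"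
  by (simp add: parity_class_def mmult_assoc parity_mmult_Gamma2)

lemma parity_class_mmult_S': "s \<in> S' \<Longrightarrow> parity_class (mmult m s) = parity_class m"
  by (cases m) (auto simp: S'_def vmat_def parity_class_def parity_def)

lemma double_coset_eq:
  assumes "\<beta> \<in> SL2Z"
  shows "double_coset \<beta> = {g \<in> SL2Z. parity_class g = parity_class \<beta>}"
proof (intro equalityI subsetI)
  fix g assume "g \<in> double_coset \<beta>"
  then obtain h s where hs: "h \<in> Gamma2" "s \<in> S'" "g = mmult (mmult h \<beta>) s"
    by (auto simp: double_coset_def)
  then have "g \<in> SL2Z"
    using assms SL2Z_mmult Gamma2_subset_SL2Z S'_subset_SL2Z by blast
  moreover have "parity_class g = parity_class \<beta>"
    using hs by (simp add: parity_class_mmult_S' parity_class_mmult_Gamma2)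
  ultimately show "g \<in> {g \<in> SL2Z. parity_class g = parity_class \<beta>}"
    by simp
next
  fix g assume "g \<in> {g \<in> SL2Z. parity_class g = parity_class \<beta>}"
  then have g: "g \<in> SL2Z" "parity g \<in> parity_class \<beta>"
    by (auto simp: parity_class_def)
  then obtain s where s: "s \<in> {I2, vmat}" "parity g = parity (mmult \<beta> s)"
    unfolding parity_class_def by (metis empty_iff insertCI insertE mmult_I2(2))
  have sS': "s \<in> S'" and \<beta>s: "mmult \<beta> s \<in> SL2Z"
    using s(1) I2_S' vmat_S' S'_subset_SL2Z assms SL2Z_mmult by blast+
  define h where "h = mmult g (adj2 (mmult \<beta> s))"
  have "h \<in> Gamma2"
    unfolding h_def using mmult_adj2_Gamma2_if_parity_eq[OF g(1) \<beta>s s(2)] .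
  moreover have "g = mmult (mmult h \<beta>) s"
    using SL2Z_adj2(2)[OF \<beta>s] by (simp add: h_def mmult_assoc)
  ultimately show "g \<in> double_coset \<beta>"
    using sS' unfolding double_coset_def by blast
qed

lemma parity_class_SL2Z:
  "parity_class ` SL2Z =
    {{(False, True, True, False), (True, False, False, True)},
     {(False, True, False, False), (True, False, False, False)},
     {(False, False, True, False), (False, False, False, True)}}"
proof (intro equalityI subsetI)
  fix P assume "P \<in> parity_class ` SL2Z"
  then obtain a b c d where "(a, b, c, d) \<in> SL2Z" "P = parity_class (a, b, c, d)"
    by (metis imageE prod_cases4)
  moreover from this have "odd (a*d - b*c)"
    by (simp add: SL2Z_iff)
  ultimately show "P \<in> {{(False, True, True, False), (True, False, False, True)},
     {(False, True, False, False), (True, False, False, False)},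
     {(False, False, True, False), (False, False, False, True)}}"
    by (cases "even a"; cases "even b"; cases "even c"; cases "even d")
      (auto simp: parity_class_def parity_def vmat_def)
next
  fix P assume "P \<in> {{(False, True, True, False), (True, False, False, True)},
     {(False, True, False, False), (True, False, False, False)},
     {(False, False, True, False), (False, False, False, True)}}"
  then have "P \<in> parity_class ` {(1, 0, 0, 1), (1, 0, 1, 1), (1, 1, 0, 1)}"
    by (auto simp: parity_class_def parity_def vmat_def)
  then show "P \<in> parity_class ` SL2Z"
    by (auto simp: SL2Z_iff)
qed

lemma card_double_cosets: "card double_cosets = 3"
proof -
  define fibre where "fibre P = {g \<in> SL2Z. parity_class g = P}" for P
  have "double_cosets = fibre ` parity_class ` SL2Z"
    by (auto simp: double_cosets_def double_coset_eq fibre_def)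
  moreover have "inj_on fibre (parity_class ` SL2Z)"
    by (rule inj_onI) (auto simp: fibre_def)
  ultimately have "card double_cosets = card (parity_class ` SL2Z)"
    by (metis card_image)
  then show ?thesis
    by (simp add: parity_class_SL2Z doubleton_eq_iff)
qed

section \<open>Descent along geodesics\<close>

definition SL2Z_imag_axis :: "complex set" where
  "SL2Z_imag_axis = (\<Union>\<beta>\<in>SL2Z. mact \<beta> ` iC1)"

lemma mem_SL2Z_imag_axis_iff:
  "z \<in> SL2Z_imag_axis \<longleftrightarrow> (\<exists>\<beta>\<in>SL2Z. \<exists>t>0. z = mact \<beta> (\<i> * of_real t))"
  by (auto simp: SL2Z_imag_axis_def iC1_def)

lemma mact_SL2Z_imag_axis:
  assumes "\<gamma> \<in> SL2Z" "z \<in> SL2Z_imag_axis"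
  shows "mact \<gamma> z \<in> SL2Z_imag_axis"
proof -
  obtain \<beta> t where \<beta>: "\<beta> \<in> SL2Z" "t > 0" "z = mact \<beta> (\<i> * of_real t)"
    using assms(2) by (auto simp: mem_SL2Z_imag_axis_iff)
  then have "mact \<gamma> z = mact (mmult \<gamma> \<beta>) (\<i> * of_real t)"
    by (simp add: mact_mmult)
  then show ?thesis
    using \<beta> assms(1) SL2Z_mmult unfolding mem_SL2Z_imag_axis_iff by blast
qed

text \<open>A half-circle orthogonal to the real axis, or a vertical line if \<open>c = 0\<close>; the points
  \<open>z\<close> with \<open>tau z = mact (a, b, c, a) z\<close> lie on it.\<close>
definition geodesic :: "int \<Rightarrow> int \<Rightarrow> int \<Rightarrow> complex set" where
  "geodesic a b c = {z. of_int c * z * cnj z + of_int a * (z + cnj z) + of_int b = 0}"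

lemma geodesic_uminus: "geodesic (-a) (-b) (-c) = geodesic a b c"
proof -
  have negated: "of_int (-c) * z * cnj z + of_int (-a) * (z + cnj z) + of_int (-b)
      = - (of_int c * z * cnj z + of_int a * (z + cnj z) + of_int b)" for z
    by (simp add: algebra_simps)
  show ?thesis
    by (simp only: geodesic_def negated neg_equal_0_iff_equal)
qed

lemma geodesic_translate:
  assumes "z \<in> geodesic a b c"
  shows "z - of_int k \<in> geodesic (a + k*c) (b + 2*a*k + c*k^2) c"
proof -
  have "of_int c * (z - of_int k) * cnj (z - of_int k) + of_int (a + k*c) * (z - of_int k + cnj (z - of_int k))
      + of_int (b + 2*a*k + c*k^2) = of_int c * z * cnj z + of_int a * (z + cnj z) + of_int b"
    by (simp add: algebra_simps power2_eq_square)
  with assms show ?thesis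
    by (simp add: geodesic_def)
qed

lemma geodesic_inversion:
  assumes "w \<noteq> 0" "w \<in> geodesic a b c"
  shows "-1 / w \<in> geodesic (-a) c b"
proof -
  have "cnj w \<noteq> 0"
    using assms(1) by simp
  then have "of_int b * (-1 / w) * cnj (-1 / w) + of_int (-a) * (-1 / w + cnj (-1 / w)) + of_int c
      = (of_int c * w * cnj w + of_int a * (w + cnj w) + of_int b) / (w * cnj w)"
    using assms(1) by (simp add: field_simps)
  with assms(2) show ?thesis
    by (simp add: geodesic_def)
qed

lemma exists_centered_shift:
  assumes "(c::int) > 0"
  shows "\<exists>k. \<bar>2 * (a + k*c)\<bar> \<le> c"
proof -
  define q where "q = (2*a + c) div (2*c)"
  have "0 \<le> (2*a + c) mod (2*c)" "(2*a + c) mod (2*c) < 2*c"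
    using assms by simp_all
  moreover have "(2*a + c) mod (2*c) = 2 * (a + (-q)*c) + c"
    unfolding q_def by (simp add: minus_div_mult_eq_mod[symmetric] algebra_simps)
  ultimately show ?thesis
    by (intro exI[of _ "-q"]) linarith
qed

lemma reduced_det_bounds:
  fixes a b c :: int
  assumes det: "a^2 - b*c = 1" and "even c" "c > 0" "\<bar>2*a\<bar> \<le> c"
  shows "0 \<le> b" "b < c"
proof -
  have sq: "a^2 = 1 + b*c"
    using det by simp
  then have "odd (a^2)"
    using \<open>even c\<close> by simp
  then have "1 \<le> a^2"
    by (metis even_zero int_one_le_iff_zero_less zero_less_power2 zero_power2)
  then have "0 \<le> b*c"
    using sq by linarith
  then show "0 \<le> b"
    using \<open>c > 0\<close> by (simp add: zero_le_mult_iff)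
  have "\<bar>2*a\<bar>^2 \<le> c^2"
    using \<open>\<bar>2*a\<bar> \<le> c\<close> by (intro power_mono) auto
  then have "(4*b) * c < c * c"
    using sq by (simp add: power_mult_distrib power2_eq_square)
  then have "4*b < c"
    using \<open>c > 0\<close> by (simp add: mult_less_cancel_right_pos)
  with \<open>0 \<le> b\<close> show "b < c"
    by linarith
qed

lemma vertical_geodesic_in_SL2Z_imag_axis:
  assumes "a^2 = 1" "even b" "z \<in> geodesic a b 0" "Im z > 0"
  shows "z \<in> SL2Z_imag_axis"
proof -
  obtain b' where b': "b = 2*b'"
    using assms(2) by blast
  have a: "a = 1 \<or> a = -1"
    using assms(1) by (simp add: power2_eq_1_iff)
  have "of_int a * Re z + of_int b' = 0"
    using arg_cong[OF assms(3)[unfolded geodesic_def mem_Collect_eq], of Re] b'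
    by (simp add: complex_add_cnj)
  then have "Re z = of_int (-a*b')"
    using a by auto
  then have "z = mact (1, -a*b', 0, 1) (\<i> * of_real (Im z))"
    by (simp add: complex_eq_iff)
  moreover have "(1, -a*b', 0, 1) \<in> SL2Z"
    by (simp add: SL2Z_iff)
  ultimately show ?thesis
    using assms(4) unfolding mem_SL2Z_imag_axis_iff by blast
qed

lemma geodesic_translate_reduced:
  assumes "a^2 - b*c = 1" "even b" "even c" "c > 0" "z \<in> geodesic a b c"
  obtains k a' b' where "z - of_int k \<in> geodesic a' b' c" "a'^2 - b'*c = 1"
    "even b'" "0 \<le> b'" "b' < c"
proof -
  obtain k where k: "\<bar>2 * (a + k*c)\<bar> \<le> c"
    using exists_centered_shift[OF assms(4)] by blast
  define a' b' where "a' = a + k*c" and "b' = b + 2*a*k + c*k^2"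
  have "z - of_int k \<in> geodesic a' b' c"
    using geodesic_translate[OF assms(5)] by (simp add: a'_def b'_def)
  moreover have det: "a'^2 - b'*c = 1"
    using assms(1) by (simp add: a'_def b'_def algebra_simps power2_eq_square)
  moreover have "even b'"
    using assms(2,3) by (simp add: b'_def)
  moreover have "0 \<le> b'" "b' < c"
    using reduced_det_bounds[OF det assms(3,4)] k by (simp_all add: a'_def)
  ultimately show thesis
    using that by blast
qed

lemma geodesic_in_SL2Z_imag_axis:
  assumes "a^2 - b*c = 1" "even b" "even c" "c \<ge> 0" "z \<in> geodesic a b c" "Im z > 0"
  shows "z \<in> SL2Z_imag_axis"
  using assms
proof (induction "nat c" arbitrary: a b c z rule: less_induct)
  case less
  consider "c = 0" | "c > 0"
    using less.prems(4) by linarith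
  then show ?case
  proof cases
    case 1
    then show ?thesis
      using vertical_geodesic_in_SL2Z_imag_axis less.prems by simp
  next
    case 2
    obtain k a' b' where w: "z - of_int k \<in> geodesic a' b' c" and det: "a'^2 - b'*c = 1"
      and "even b'" "0 \<le> b'" "b' < c"
      using geodesic_translate_reduced[OF less.prems(1-3) 2 less.prems(5)] .
    define v where "v = -1 / (z - of_int k)"
    have "Im (z - of_int k) > 0"
      using less.prems(6) by simp
    then have "z - of_int k \<noteq> 0"
      by auto
    then have v: "v \<in> geodesic (-a') c b'"
      unfolding v_def using w by (rule geodesic_inversion)
    have "Im v > 0"
      using Im_mact_pos[OF _ \<open>Im (z - of_int k) > 0\<close>, of "(0, -1, 1, 0)"]
      by (simp add: SL2Z_iff v_def)
    have det': "(-a')^2 - c*b' = 1" and smaller: "nat b' < nat c"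
      using det \<open>0 \<le> b'\<close> \<open>b' < c\<close> by (simp_all add: algebra_simps)
    have "v \<in> SL2Z_imag_axis"
      using less.hyps[OF smaller det' less.prems(3) \<open>even b'\<close> \<open>0 \<le> b'\<close> v \<open>Im v > 0\<close>] .
    moreover have "z = mact (1, k, 0, 1) (mact (0, 1, -1, 0) v)"
      using \<open>Im (z - of_int k) > 0\<close> by (auto simp: v_def)
    moreover have "(1, k, 0, 1) \<in> SL2Z" "(0, 1, -1, 0) \<in> SL2Z"
      by (simp_all add: SL2Z_iff)
    ultimately show ?thesis
      using mact_SL2Z_imag_axis by metis
  qed
qed

section \<open>Real points\<close>

lemma tau_fixed_imp_geodesic:
  assumes "(a, b, c, d) \<in> SL2Z" "Im z > 0" "tau z = mact (a, b, c, d) z"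
  shows "d = a" "z \<in> geodesic a b c"
proof -
  have "of_int c * z + of_int d \<noteq> 0"
    using mact_denom_nonzero assms(1,2) by simp
  then have eq: "- cnj z * (of_int c * z + of_int d) = of_int a * z + of_int b"
    using assms(3) by (simp add: tau_def divide_eq_eq)
  have "of_int c * z * cnj z + of_int d * cnj z + of_int a * z + of_int b
      = (of_int a * z + of_int b) - (- cnj z * (of_int c * z + of_int d))"
    by (simp add: algebra_simps)
  with eq have fixed: "of_int c * z * cnj z + of_int d * cnj z + of_int a * z + of_int b = 0"
    by simp
  have "Im (of_int c * z * cnj z) = 0"
    by (simp add: mult.assoc complex_mult_cnj)
  then have "(of_int a - of_int d) * Im z = 0"
    using arg_cong[OF fixed, of Im] by (simp add: algebra_simps)
  then show "d = a"
    using assms(2) by simp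
  with fixed show "z \<in> geodesic a b c"
    by (simp add: geodesic_def algebra_simps)
qed

lemma tau_in_orbit2_imp_SL2Z_imag_axis:
  assumes "Im z > 0" "tau z \<in> orbit2 z"
  shows "z \<in> SL2Z_imag_axis"
proof -
  obtain g where g: "g \<in> Gamma2" "tau z = mact g z"
    using assms(2) by (auto simp: orbit2_eq_image)
  obtain a b c d where abcd: "g = (a, b, c, d)"
    by (cases g)
  then have "d = a" and geo: "z \<in> geodesic a b c"
    using tau_fixed_imp_geodesic g Gamma2_subset_SL2Z assms(1) by blast+
  then have det: "a^2 - b*c = 1" and "even b" "even c"
    using g(1) by (simp_all add: abcd Gamma2_iff power2_eq_square)
  consider "c \<ge> 0" | "c < 0"
    by linarith
  then show ?thesis
  proof cases
    case 1
    then show ?thesis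
      using geodesic_in_SL2Z_imag_axis[OF det \<open>even b\<close> \<open>even c\<close> _ geo assms(1)] by simp
  next
    case 2
    have "(-a)^2 - (-b)*(-c) = 1" "even (-b)" "even (-c)" "z \<in> geodesic (-a) (-b) (-c)"
      using det \<open>even b\<close> \<open>even c\<close> geo by (simp_all add: geodesic_uminus)
    with 2 show ?thesis
      using geodesic_in_SL2Z_imag_axis[of "-a" "-b" "-c" z] assms(1) by simp
  qed
qed

lemma SL2Z_imag_axis_imp_tau_in_orbit2:
  assumes "z \<in> SL2Z_imag_axis"
  shows "Im z > 0" "tau z \<in> orbit2 z"
proof -
  obtain \<beta> t where \<beta>: "\<beta> \<in> SL2Z" "t > 0" and z: "z = mact \<beta> (\<i> * of_real t)"
    using assms by (auto simp: mem_SL2Z_imag_axis_iff)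
  then show "Im z > 0"
    using Im_mact_pos by simp
  have "tau_mat \<beta> \<in> SL2Z" "parity (tau_mat \<beta>) = parity \<beta>"
    using \<beta>(1) by (cases \<beta>; simp add: tau_mat_def SL2Z_iff parity_def)+
  then have g: "mmult (tau_mat \<beta>) (adj2 \<beta>) \<in> Gamma2"
    using mmult_adj2_Gamma2_if_parity_eq \<beta>(1) by blast
  have "tau (\<i> * of_real t) = \<i> * of_real t"
    by (simp add: tau_def)
  then have "tau z = mact (tau_mat \<beta>) (\<i> * of_real t)"
    by (simp add: z tau_mact)
  also have "\<dots> = mact (mmult (mmult (tau_mat \<beta>) (adj2 \<beta>)) \<beta>) (\<i> * of_real t)"
    by (simp add: mmult_assoc SL2Z_adj2(2)[OF \<beta>(1)])
  also have "\<dots> = mact (mmult (tau_mat \<beta>) (adj2 \<beta>)) z"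
    using mact_mmult[OF \<beta>(1)] \<beta>(2) by (simp add: z)
  finally show "tau z \<in> orbit2 z"
    using g by (auto simp: orbit2_eq_image)
qed

lemma X_real_eq: "X_real = orbit2 ` SL2Z_imag_axis"
proof -
  have "X_real = orbit2 ` {z. Im z > 0 \<and> orbit2 (tau z) = orbit2 z}"
    by (auto simp: X_real_def Xquot_def upper_half_plane_def tauX_orbit2)
  also have "{z. Im z > 0 \<and> orbit2 (tau z) = orbit2 z} = {z. Im z > 0 \<and> tau z \<in> orbit2 z}"
    using orbit2_eq_iff[of _ "tau _"] by (metis less_irrefl)
  also have "\<dots> = SL2Z_imag_axis"
    using tau_in_orbit2_imp_SL2Z_imag_axis SL2Z_imag_axis_imp_tau_in_orbit2 by blast
  finally show ?thesis .
qed

lemma inversion_image_iC1: "(\<lambda>w. -1 / w) ` iC1 = iC1"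
proof -
  have inversion: "-1 / (\<i> * of_real y) = \<i> * of_real (1 / y)" for y
    by (simp add: divide_complex_def complex_eq_iff)
  show ?thesis
  proof (intro equalityI subsetI)
    fix w assume "w \<in> (\<lambda>w. -1 / w) ` iC1"
    then obtain y where "y > 0" "w = -1 / (\<i> * of_real y)"
      unfolding iC1_def by blast
    moreover have "1 / y > 0"
      using \<open>y > 0\<close> by simp
    ultimately show "w \<in> iC1"
      unfolding iC1_def inversion by blast
  next
    fix w assume "w \<in> iC1"
    then obtain y where "y > 0" "w = \<i> * of_real y"
      unfolding iC1_def by blast
    moreover have "1 / y > 0" "\<i> * of_real y = -1 / (\<i> * of_real (1 / y))"
      using \<open>y > 0\<close> by (simp_all add: inversion)
    ultimately show "w \<in> (\<lambda>w. -1 / w) ` iC1"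
      unfolding iC1_def by blast
  qed
qed

lemma mact_S'_iC1:
  assumes "s \<in> S'"
  shows "mact s ` iC1 = iC1"
proof -
  have "s \<in> {I2, (-1, 0, 0, -1)} \<or> s \<in> {vmat, (0, 1, -1, 0)}"
    using assms by (auto simp: S'_def I2_def)
  then consider "mact s = id" | "mact s = (\<lambda>w. -1 / w)"
    by (auto simp: fun_eq_iff I2_def vmat_def)
  then show ?thesis
    by cases (simp_all only: image_id id_apply inversion_image_iC1)
qed

lemma orbit2_image_double_coset:
  assumes "\<beta> \<in> SL2Z" "\<beta>' \<in> double_coset \<beta>"
  shows "orbit2 ` mact \<beta>' ` iC1 = orbit2 ` mact \<beta> ` iC1"
proof -
  obtain h s where hs: "h \<in> Gamma2" "s \<in> S'" "\<beta>' = mmult (mmult h \<beta>) s"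
    using assms(2) by (auto simp: double_coset_def)
  have "s \<in> SL2Z"
    using hs(2) S'_subset_SL2Z by blast
  have "orbit2 (mact \<beta>' w) = orbit2 (mact \<beta> (mact s w))" if "w \<in> iC1" for w
  proof -
    have "Im w > 0"
      using that by (auto simp: iC1_def)
    then have "Im (mact s w) > 0"
      using \<open>s \<in> SL2Z\<close> Im_mact_pos by blast
    then have "Im (mact \<beta> (mact s w)) > 0"
      using assms(1) Im_mact_pos by blast
    have "mact \<beta>' w = mact h (mact \<beta> (mact s w))"
      using mact_mmult[OF \<open>s \<in> SL2Z\<close>] mact_mmult[OF assms(1)] \<open>Im w > 0\<close> \<open>Im (mact s w) > 0\<close>
      by (simp add: hs(3))
    then show ?thesis
      using orbit2_mact[OF hs(1)] \<open>Im (mact \<beta> (mact s w)) > 0\<close> by simp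
  qed
  then have "orbit2 ` mact \<beta>' ` iC1 = orbit2 ` mact \<beta> ` mact s ` iC1"
    by (simp add: image_image cong: image_cong)
  then show ?thesis
    using mact_S'_iC1[OF hs(2)] by simp
qed

lemma Union_double_cosets_eq:
  "(\<Union>D\<in>double_cosets. orbit2 ` (mact (SOME \<beta>. \<beta> \<in> D) ` iC1)) = orbit2 ` SL2Z_imag_axis"
proof -
  have "orbit2 ` mact (SOME \<beta>'. \<beta>' \<in> double_coset \<beta>) ` iC1 = orbit2 ` mact \<beta> ` iC1"
    if "\<beta> \<in> SL2Z" for \<beta>
    using orbit2_image_double_coset[OF that] mem_double_coset_self by (metis someI)
  then show ?thesis
    by (simp add: double_cosets_def SL2Z_imag_axis_def image_UN)
qed

theorem theorem5p5:
  shows "card double_cosets = 3 \<and>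
    X_real = (\<Union>D\<in>double_cosets. orbit2 ` (mact (SOME \<beta>. \<beta> \<in> D) ` iC1))"
  using card_double_cosets X_real_eq Union_double_cosets_eq by simp

end
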